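(* Let $T=(t_{kl})$ be an $\mathbb{N}$-tableau of shape $\lambda$ and let $\widehat{T}$ be its image under the toggle map defined in the context. Then for every border box $(a,b)$ of $\lambda$, \[\mathrm{diag}_{\widehat{T}}(a,b)=\mathrm{rect}_T(a,b).\]
   Context: Partitions are drawn in English notation with matrix coordinates: the box in row $i$ and column $j$ is $(i,j)$, and $(1,1)$ is the upper-left box. An $\mathbb{N}$-tableau of shape $\lambda$ is an assignment of a nonnegative integer to each box of $\lambda$. A border box of $\lambda$ is a box $(i,j)$ such that $(i+1,j+1)$ is not a box; a corner box is a box $(i,j)$ such that neither $(i+1,j)$ nor $(i,j+1)$ is a box. For an $\mathbb{N}$-tableau $B=(b_{kl})$ and a box $(i,j)$, the diagonal sum is $\mathrm{diag}_B(i,j)=\sum_{k=0}^{\min(i,j)-1}b_{i-k,j-k}$ and the rectangle sum is $\mathrm{rect}_B(i,j)=\sum_{k=1}^{i}\sum_{l=1}^{j}b_{kl}$ (boxes outside the shape contributing $0$). The toggle map $T\mapsto\widehat{T}$ is defined recursively: $\widehat{\emptyset}=\emptyset$; if $T'$ is obtained from $T$ by adding a corner box $(i,j)$ (of $\mathrm{sh}(T')$) with entry $x$, then $\widehat{T'}$ is obtained from $\widehat{T}$ as follows. For $k\ge1$ let $\beta_k,\gamma_k,\alpha_k$ be the entries of $\widehat{T}$ at $(i-k,j-k)$, $(i-k+1,j-k)$, $(i-k,j-k+1)$ respectively (taken to be $0$ if the box is not in $\mathrm{sh}(T)$). Then $\widehat{T'}$ agrees with $\widehat{T}$ except that for $1\le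 k<\min(i,j)$ the entry at $(i-k,j-k)$ becomes $\max(\alpha_{k+1},\gamma_{k+1})+\min(\alpha_k,\gamma_k)-\beta_k$, and the entry at $(i,j)$ is $\max(\alpha_1,\gamma_1)+x$. This is independent of the order in which boxes are added. *)

theory Defs
  imports Main
begin

text \<open>A partition is a weakly decreasing list of positive integers (row lengths).
Boxes use 1-based matrix coordinates (row, column).\<close>

definition is_partition :: "nat list \<Rightarrow> bool" where
  "is_partition lam \<longleftrightarrow> sorted (rev lam) \<and> (\<forall>r \<in> set lam. 0 < r)"

definition boxes :: "nat list \<Rightarrow> (nat \<times> nat) set" where
  "boxes lam = {(i, j). 1 \<le> i \<and> i \<le> length lam \<and> 1 \<le> j \<and> j \<le> lam ! (i - 1)}"

definition border_box :: "nat list \<Rightarrow> nat \<Rightarrow> nat \<Rightarrow> bool" where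
  "border_box lam i j \<longleftrightarrow> (i, j) \<in> boxes lam \<and> (i + 1, j + 1) \<notin> boxes lam"

text \<open>Tableaux are functions on coordinates; only the values on the boxes of the
shape matter. Entries outside the shape are read as 0.\<close>

definition entry :: "(nat \<times> nat) set \<Rightarrow> (nat \<Rightarrow> nat \<Rightarrow> 'a::zero) \<Rightarrow> nat \<Rightarrow> nat \<Rightarrow> 'a" where
  "entry D B i j = (if (i, j) \<in> D then B i j else 0)"

definition diag_sum :: "nat list \<Rightarrow> (nat \<Rightarrow> nat \<Rightarrow> 'a::comm_monoid_add) \<Rightarrow> nat \<Rightarrow> nat \<Rightarrow> 'a" where
  "diag_sum lam B i j = (\<Sum>k<min i j. entry (boxes lam) B (i - k) (j - k))"

definition rect_sum :: "nat list \<Rightarrow> (nat \<Rightarrow> nat \<Rightarrow> 'a::comm_monoid_add) \<Rightarrow> nat \<Rightarrow> nat \<Rightarrow> 'a" where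
  "rect_sum lam B i j = (\<Sum>k=1..i. \<Sum>l=1..j. entry (boxes lam) B k l)"

text \<open>One step of the toggle map: the current image S lives on the box set D;
a corner box (i,j) with entry x is added.  Values are computed in int.\<close>

definition toggle_step :: "(nat \<times> nat) set \<Rightarrow> (nat \<Rightarrow> nat \<Rightarrow> int) \<Rightarrow> nat \<Rightarrow> nat \<Rightarrow> nat \<Rightarrow> (nat \<Rightarrow> nat \<Rightarrow> int)" where
  "toggle_step D S i j x =
     (let v = entry D S;
          \<alpha> = (\<lambda>k. v (i - k) (j - k + 1));
          \<beta> = (\<lambda>k. v (i - k) (j - k));
          \<gamma> = (\<lambda>k. v (i - k + 1) (j - k))
      in (\<lambda>p q.
           if p = i \<and> q = j then max (\<alpha> 1) (\<gamma> 1) + int x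
           else if p < i \<and> q < j \<and> i - p = j - q \<and> i - p < min i j then
             (let k = i - p in max (\<alpha> (k + 1)) (\<gamma> (k + 1)) + min (\<alpha> k) (\<gamma> k) - \<beta> k)
           else S p q))"

text \<open>Boxes of the shape listed row by row, left to right; each prefix is a partition
and each added box is a corner of the new shape.\<close>

definition box_order :: "nat list \<Rightarrow> (nat \<times> nat) list" where
  "box_order lam = concat (map (\<lambda>i. map (\<lambda>j. (i, j)) [1..<lam ! (i - 1) + 1]) [1..<length lam + 1])"

definition toggle :: "nat list \<Rightarrow> (nat \<Rightarrow> nat \<Rightarrow> nat) \<Rightarrow> (nat \<Rightarrow> nat \<Rightarrow> int)" where
  "toggle lam T = snd (fold (\<lambda>(i, j) (D, S). (insert (i, j) D, toggle_step D S i j (T i j)))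
                          (box_order lam) ({}, (\<lambda>_ _. 0)))"

end

theory Submission
  imports Defs
begin

text \<open>Grow the shape one corner at a time and keep the invariant that the partial image is a
reverse plane partition on a down-closed shape whose border boxes satisfy diag = rect.
Adding a corner (i,j) with entry x only toggles the diagonal through (i,j).  Since
max + min = sum, the toggle formulas summed along that diagonal give
diag(i,j) = diag(i-1,j) + diag(i,j-1) - diag(i-1,j-1) + x, up to one boundary term
min(\<alpha>,\<gamma>) at the end of the diagonal, which vanishes because one of the two entries lies
outside the shape and the other is nonnegative.  Rectangle sums obey the same
inclusion-exclusion recurrence.  Monotonicity is what keeps the toggled entries between their
neighbours, hence nonnegative; other border boxes keep their diagonals and rectangles.\<close>

definition down_closed :: "(nat \<times> nat) set \<Rightarrow> bool" where
  "down_closed D \<longleftrightarrow> (\<forall>(p, q) \<in> D. 1 \<le> p \<and> 1 \<le> q \<and>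
     (\<forall>p' q'. 1 \<le> p' \<and> p' \<le> p \<and> 1 \<le> q' \<and> q' \<le> q \<longrightarrow> (p', q') \<in> D))"

definition reverse_plane_partition :: "(nat \<times> nat) set \<Rightarrow> (nat \<Rightarrow> nat \<Rightarrow> int) \<Rightarrow> bool" where
  "reverse_plane_partition D S \<longleftrightarrow> (\<forall>p q. 0 \<le> entry D S p q) \<and>
     (\<forall>p q. (p, q + 1) \<in> D \<longrightarrow> entry D S p q \<le> entry D S p (q + 1)) \<and>
     (\<forall>p q. (p + 1, q) \<in> D \<longrightarrow> entry D S p q \<le> entry D S (p + 1) q)"

definition diag_sum_on ::
    "(nat \<times> nat) set \<Rightarrow> (nat \<Rightarrow> nat \<Rightarrow> 'a::comm_monoid_add) \<Rightarrow> nat \<Rightarrow> nat \<Rightarrow> 'a" where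
  "diag_sum_on D B i j = (\<Sum>k<min i j. entry D B (i - k) (j - k))"

definition rect_sum_on ::
    "(nat \<times> nat) set \<Rightarrow> (nat \<Rightarrow> nat \<Rightarrow> 'a::comm_monoid_add) \<Rightarrow> nat \<Rightarrow> nat \<Rightarrow> 'a" where
  "rect_sum_on D B i j = (\<Sum>k=1..i. \<Sum>l=1..j. entry D B k l)"

lemma diag_sum_eq_diag_sum_on: "diag_sum lam = diag_sum_on (boxes lam)"
  by (simp add: fun_eq_iff diag_sum_def diag_sum_on_def)

lemma rect_sum_eq_rect_sum_on: "rect_sum lam = rect_sum_on (boxes lam)"
  by (simp add: fun_eq_iff rect_sum_def rect_sum_on_def)

lemma down_closed_pos:
  assumes "down_closed D" "(p, q) \<in> D"
  shows "1 \<le> p" "1 \<le> q"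
  using assms by (auto simp: down_closed_def)

lemma down_closed_mem:
  assumes "down_closed D" "(p, q) \<in> D" "1 \<le> p'" "p' \<le> p" "1 \<le> q'" "q' \<le> q"
  shows "(p', q') \<in> D"
  using assms unfolding down_closed_def by blast

lemma entry_axis_zero:
  assumes "down_closed D"
  shows "entry D B 0 q = 0" "entry D B p 0 = 0"
  using down_closed_pos[OF assms] by (force simp: entry_def)+

lemma diag_sum_on_eq_sum:
  assumes "down_closed D" "min a b \<le> m"
  shows "diag_sum_on D B a b = (\<Sum>k<m. entry D B (a - k) (b - k))"
  unfolding diag_sum_on_def
proof (rule sum.mono_neutral_left)
  show "\<forall>k\<in>{..<m} - {..<min a b}. entry D B (a - k) (b - k) = 0"
    using entry_axis_zero[OF assms(1)] by (auto simp: min_def split: if_splits)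
qed (use assms(2) in auto)

lemma rect_sum_on_Suc_Suc:
  "rect_sum_on D B (Suc a) (Suc b) + rect_sum_on D B a b
     = rect_sum_on D B a (Suc b) + rect_sum_on D B (Suc a) b + entry D B (Suc a) (Suc b)"
  by (simp add: rect_sum_on_def sum.distrib add_ac)

lemma rect_sum_on_insert:
  assumes "\<not> (i \<le> a \<and> j \<le> b)"
  shows "rect_sum_on (insert (i, j) D) B a b = rect_sum_on D B a b"
  unfolding rect_sum_on_def
  by (intro sum.cong refl) (use assms in \<open>auto simp: entry_def\<close>)

lemma rect_sum_on_insert_corner:
  assumes "1 \<le> i" "1 \<le> j"
  shows "rect_sum_on (insert (i, j) D) B i j + rect_sum_on D B (i - 1) (j - 1)
     = rect_sum_on D B (i - 1) j + rect_sum_on D B i (j - 1) + B i j"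
proof -
  obtain i' j' where ij: "i = Suc i'" "j = Suc j'"
    using assms by (metis Suc_pred' less_eq_Suc_le One_nat_def)
  show ?thesis
    using rect_sum_on_Suc_Suc[of "insert (i, j) D" B i' j']
    unfolding ij by (simp add: rect_sum_on_insert entry_def)
qed

lemma sum_max_plus_sum_min:
  fixes f g :: "nat \<Rightarrow> 'a::linordered_ab_group_add"
  shows "(\<Sum>k<Suc n. max (f k) (g k)) + (\<Sum>k<n. min (f k) (g k))
     = (\<Sum>k<Suc n. f k + g k) - min (f n) (g n)"
proof -
  have "max (f k) (g k) + min (f k) (g k) = f k + g k" for k
    by (simp add: max_def min_def)
  then show ?thesis
    by (simp add: sum.distrib[symmetric] algebra_simps)
qed

definition border_sums_agree ::
    "(nat \<Rightarrow> nat \<Rightarrow> nat) \<Rightarrow> (nat \<times> nat) set \<Rightarrow> (nat \<Rightarrow> nat \<Rightarrow> int) \<Rightarrow> bool" where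
  "border_sums_agree T D S \<longleftrightarrow>
     (\<forall>a b. (a, b) \<in> D \<longrightarrow> (a + 1, b + 1) \<notin> D \<longrightarrow> diag_sum_on D S a b = int (rect_sum_on D T a b))"

locale corner_toggle =
  fixes D :: "(nat \<times> nat) set" and S :: "nat \<Rightarrow> nat \<Rightarrow> int" and i j x :: nat
  assumes down_closed: "down_closed D"
    and rpp: "reverse_plane_partition D S"
    and corner_not_mem: "(i, j) \<notin> D"
    and down_closed_insert: "down_closed (insert (i, j) D)"
begin

abbreviation old :: "nat \<Rightarrow> nat \<Rightarrow> int" where
  "old \<equiv> entry D S"

abbreviation new :: "nat \<Rightarrow> nat \<Rightarrow> int" where
  "new \<equiv> entry (insert (i, j) D) (toggle_step D S i j x)"

lemma corner_pos: "1 \<le> i" "1 \<le> j"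
  using down_closed_pos[OF down_closed_insert] by auto

lemma mem_below_corner:
  assumes "1 \<le> p" "p \<le> i" "1 \<le> q" "q \<le> j" "(p, q) \<noteq> (i, j)"
  shows "(p, q) \<in> D"
  using down_closed_mem[OF down_closed_insert, of i j p q] assms by auto

lemma not_mem_above_corner:
  assumes "i \<le> p" "j \<le> q"
  shows "(p, q) \<notin> D"
  using down_closed_mem[OF down_closed, of p q i j] assms corner_not_mem corner_pos by auto

lemma old_nonneg: "0 \<le> old p q"
  using rpp by (simp add: reverse_plane_partition_def)

lemma old_mono_right: "(p, q + 1) \<in> D \<Longrightarrow> old p q \<le> old p (q + 1)"
  using rpp by (simp add: reverse_plane_partition_def)

lemma old_mono_down: "(p + 1, q) \<in> D \<Longrightarrow> old p q \<le> old (p + 1) q"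
  using rpp by (simp add: reverse_plane_partition_def)

lemma new_off_diagonal:
  assumes "\<nexists>k. p + k = i \<and> q + k = j"
  shows "new p q = old p q"
proof -
  have not_corner: "\<not> (p = i \<and> q = j)"
    using assms by auto
  have not_diagonal: "\<not> (p < i \<and> q < j \<and> i - p = j - q \<and> i - p < min i j)"
  proof
    assume "p < i \<and> q < j \<and> i - p = j - q \<and> i - p < min i j"
    then have "p + (i - p) = i \<and> q + (i - p) = j" by auto
    with assms show False by blast
  qed
  have "toggle_step D S i j x p q = S p q"
    unfolding toggle_step_def Let_def by (simp only: if_not_P[OF not_corner] if_not_P[OF not_diagonal])
  then show ?thesis
    using not_corner by (auto simp: entry_def)
qed

lemma new_corner: "new i j = max (old (i - 1) j) (old i (j - 1)) + int x"
  using corner_pos by (simp add: entry_def toggle_step_def Let_def)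

lemma new_diagonal:
  assumes "1 \<le> p" "1 \<le> q" "0 < k" "p + k = i" "q + k = j"
  shows "new p q = max (old (p - 1) q) (old p (q - 1)) + min (old p (q + 1)) (old (p + 1) q) - old p q"
proof -
  have "(p, q) \<in> D"
    using assms by (intro mem_below_corner) auto
  moreover have "toggle_step D S i j x p q
      = max (old (p - 1) q) (old p (q - 1)) + min (old p (q + 1)) (old (p + 1) q) - old p q"
    using assms by (auto simp: toggle_step_def Let_def)
  ultimately show ?thesis
    by (simp add: entry_def)
qed

lemma new_lower_bound:
  assumes "1 \<le> p" "1 \<le> q" "p + k = i" "q + k = j"
  shows "max (old (p - 1) q) (old p (q - 1)) \<le> new p q"
proof (cases "k = 0")
  case True
  then show ?thesis
    using assms new_corner by simp
next
  case False
  have "(p, q + 1) \<in> D" "(p + 1, q) \<in> D"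
    using assms False by (auto intro!: mem_below_corner)
  then have "old p q \<le> min (old p (q + 1)) (old (p + 1) q)"
    using old_mono_right old_mono_down by simp
  then show ?thesis
    using assms False new_diagonal[of p q k] by linarith
qed

lemma new_upper_bound:
  assumes "1 \<le> p" "1 \<le> q" "0 < k" "p + k = i" "q + k = j"
  shows "new p q \<le> min (old p (q + 1)) (old (p + 1) q)"
proof -
  have "(p, q) \<in> D"
    using assms by (intro mem_below_corner) auto
  then have "old (p - 1) q \<le> old p q" "old p (q - 1) \<le> old p q"
    using assms old_mono_down[of "p - 1" q] old_mono_right[of p "q - 1"] by auto
  then have "max (old (p - 1) q) (old p (q - 1)) \<le> old p q"
    by simp
  then show ?thesis
    using new_diagonal[OF assms] by linarith
qed

lemma new_nonneg: "0 \<le> new p q"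
proof (cases "\<exists>k. p + k = i \<and> q + k = j")
  case True
  then obtain k where k: "p + k = i" "q + k = j"
    by blast
  show ?thesis
  proof (cases "p = 0 \<or> q = 0")
    case True
    then show ?thesis
      by (auto simp: entry_axis_zero[OF down_closed_insert])
  next
    case False
    then have "old (p - 1) q \<le> new p q"
      using new_lower_bound[OF _ _ k] by simp
    then show ?thesis
      using old_nonneg[of "p - 1" q] by linarith
  qed
next
  case False
  then show ?thesis
    using new_off_diagonal old_nonneg by simp
qed

lemma new_mono_neighbour:
  assumes mem: "(p', q') \<in> insert (i, j) D" and step: "(p', q') = (p, q + 1) \<or> (p', q') = (p + 1, q)"
  shows "new p q \<le> new p' q'"
proof -
  have pos': "1 \<le> p'" "1 \<le> q'"
    using down_closed_pos[OF down_closed_insert mem] by auto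
  consider (source) k where "p + k = i" "q + k = j"
    | (target) k where "p' + k = i" "q' + k = j" "\<nexists>k. p + k = i \<and> q + k = j"
    | (neither) "\<nexists>k. p + k = i \<and> q + k = j" "\<nexists>k. p' + k = i \<and> q' + k = j"
    by blast
  then show ?thesis
  proof cases
    case source
    have target_off: "\<nexists>k. p' + k = i \<and> q' + k = j"
      using source step by auto
    show ?thesis
    proof (cases "p = 0 \<or> q = 0")
      case True
      then show ?thesis
        using new_nonneg by (auto simp: entry_axis_zero[OF down_closed_insert])
    next
      case False
      have "k \<noteq> 0"
      proof
        assume "k = 0"
        then have "i \<le> p'" "j \<le> q'" "(p', q') \<noteq> (i, j)"
          using source step by auto
        then show False
          using mem not_mem_above_corner by auto
      qed
      then have "new p q \<le> min (old p (q + 1)) (old (p + 1) q)"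
        using False source by (intro new_upper_bound) auto
      also have "\<dots> \<le> new p' q'"
        using step new_off_diagonal[OF target_off] by auto
      finally show ?thesis .
    qed
  next
    case target
    have "new p q \<le> max (old (p' - 1) q') (old p' (q' - 1))"
      using step new_off_diagonal[OF target(3)] by auto
    also have "\<dots> \<le> new p' q'"
      using pos' target by (intro new_lower_bound) auto
    finally show ?thesis .
  next
    case neither
    then have "(p', q') \<in> D"
      using mem by auto
    then show ?thesis
      using step neither new_off_diagonal old_mono_right old_mono_down by auto
  qed
qed

lemma reverse_plane_partition_insert:
  "reverse_plane_partition (insert (i, j) D) (toggle_step D S i j x)"
  unfolding reverse_plane_partition_def using new_nonneg new_mono_neighbour by blast

lemma diag_sum_on_insert_corner:
  "diag_sum_on (insert (i, j) D) (toggle_step D S i j x) i j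
     = diag_sum_on D S (i - 1) j + diag_sum_on D S i (j - 1) - diag_sum_on D S (i - 1) (j - 1) + int x"
proof -
  obtain n where n: "min i j = Suc n"
    using corner_pos not0_implies_Suc[of "min i j"] by auto
  \<comment> \<open>the \<alpha>, \<gamma>, \<beta> of toggle_step at index k + 1: the terms of the three old diagonal sums\<close>
  define \<alpha> where "\<alpha> k = old (i - 1 - k) (j - k)" for k
  define \<gamma> where "\<gamma> k = old (i - k) (j - 1 - k)" for k
  define \<beta> where "\<beta> k = old (i - 1 - k) (j - 1 - k)" for k
  have diagonal: "new (i - Suc k) (j - Suc k) = max (\<alpha> (Suc k)) (\<gamma> (Suc k)) + min (\<alpha> k) (\<gamma> k) - \<beta> k"
    if "k < n" for k
    using that n new_diagonal[of "i - Suc k" "j - Suc k" "Suc k"]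
    by (simp add: \<alpha>_def \<gamma>_def \<beta>_def Suc_diff_Suc)
  \<comment> \<open>the diagonal ends in row 1 or column 1, so one of its last two neighbours is outside\<close>
  have boundary: "min (\<alpha> n) (\<gamma> n) = 0"
  proof (cases "i \<le> j")
    case True
    then have "\<alpha> n = 0"
      using n by (simp add: \<alpha>_def entry_axis_zero[OF down_closed])
    then show ?thesis
      using old_nonneg by (simp add: \<gamma>_def)
  next
    case False
    then have "\<gamma> n = 0"
      using n by (simp add: \<gamma>_def entry_axis_zero[OF down_closed])
    then show ?thesis
      using old_nonneg by (simp add: \<alpha>_def)
  qed
  have "diag_sum_on (insert (i, j) D) (toggle_step D S i j x) i j
      = new i j + (\<Sum>k<n. new (i - Suc k) (j - Suc k))"
    unfolding diag_sum_on_def n by (simp only: sum.lessThan_Suc_shift diff_zero)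
  also have "\<dots> = int x + ((\<Sum>k<Suc n. max (\<alpha> k) (\<gamma> k)) + (\<Sum>k<n. min (\<alpha> k) (\<gamma> k))) - (\<Sum>k<n. \<beta> k)"
  proof -
    have "new i j = max (\<alpha> 0) (\<gamma> 0) + int x"
      using new_corner by (simp add: \<alpha>_def \<gamma>_def)
    moreover have "(\<Sum>k<n. new (i - Suc k) (j - Suc k))
        = (\<Sum>k<n. max (\<alpha> (Suc k)) (\<gamma> (Suc k))) + (\<Sum>k<n. min (\<alpha> k) (\<gamma> k)) - (\<Sum>k<n. \<beta> k)"
      using diagonal by (simp add: sum.distrib sum_subtractf)
    ultimately show ?thesis
      unfolding sum.lessThan_Suc_shift[of "\<lambda>k. max (\<alpha> k) (\<gamma> k)"] by simp
  qed
  also have "\<dots> = int x + (\<Sum>k<Suc n. \<alpha> k) + (\<Sum>k<Suc n. \<gamma> k) - (\<Sum>k<n. \<beta> k)"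
    unfolding sum_max_plus_sum_min boundary sum.distrib by simp
  also have "(\<Sum>k<Suc n. \<alpha> k) = diag_sum_on D S (i - 1) j"
    using n diag_sum_on_eq_sum[OF down_closed, of "i - 1" j "Suc n" S] by (simp add: \<alpha>_def)
  also have "(\<Sum>k<Suc n. \<gamma> k) = diag_sum_on D S i (j - 1)"
    using n diag_sum_on_eq_sum[OF down_closed, of i "j - 1" "Suc n" S] by (simp add: \<gamma>_def)
  also have "(\<Sum>k<n. \<beta> k) = diag_sum_on D S (i - 1) (j - 1)"
    using n by (simp add: diag_sum_on_def \<beta>_def min_diff)
  finally show ?thesis
    by simp
qed

lemma border_sums_agree_near_corner:
  assumes "border_sums_agree T D S"
    and "(a, b) \<in> {(i - 1, j), (i, j - 1), (i - 1, j - 1)}"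
  shows "diag_sum_on D S a b = int (rect_sum_on D T a b)"
proof (cases "a = 0 \<or> b = 0")
  case True
  then show ?thesis
    by (auto simp: diag_sum_on_def rect_sum_on_def)
next
  case False
  then have "(a, b) \<in> D"
    using assms(2) corner_pos by (auto intro: mem_below_corner)
  moreover have "(a + 1, b + 1) \<notin> D"
    using assms(2) False corner_not_mem not_mem_above_corner[of i "j + 1"]
      not_mem_above_corner[of "i + 1" j] by auto
  ultimately show ?thesis
    using assms(1) by (simp add: border_sums_agree_def)
qed

lemma diag_sum_on_insert_other:
  assumes "(a, b) \<in> D" "(a + 1, b + 1) \<notin> insert (i, j) D"
  shows "diag_sum_on (insert (i, j) D) (toggle_step D S i j x) a b = diag_sum_on D S a b"
  unfolding diag_sum_on_def
proof (intro sum.cong refl new_off_diagonal notI)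
  fix k assume k: "k \<in> {..<min a b}" and "\<exists>m. a - k + m = i \<and> b - k + m = j"
  then obtain m where m: "a - k + m = i" "b - k + m = j"
    by blast
  have "\<not> (i \<le> a \<and> j \<le> b)"
    using assms(1) not_mem_above_corner by blast
  then have "a + 1 \<le> i" "b + 1 \<le> j"
    using k m by auto
  then have "(a + 1, b + 1) \<in> insert (i, j) D"
    using down_closed_mem[OF down_closed_insert, of i j "a + 1" "b + 1"] by auto
  with assms(2) show False ..
qed

end

definition toggle_invariant ::
    "(nat \<Rightarrow> nat \<Rightarrow> nat) \<Rightarrow> (nat \<times> nat) set \<Rightarrow> (nat \<Rightarrow> nat \<Rightarrow> int) \<Rightarrow> bool" where
  "toggle_invariant T D S \<longleftrightarrow>
     down_closed D \<and> reverse_plane_partition D S \<and> border_sums_agree T D S"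

lemma toggle_invariant_insert:
  assumes inv: "toggle_invariant T D S" and "(i, j) \<notin> D" "down_closed (insert (i, j) D)"
  shows "toggle_invariant T (insert (i, j) D) (toggle_step D S i j (T i j))"
proof -
  interpret corner_toggle D S i j "T i j"
    using assms by unfold_locales (auto simp: toggle_invariant_def)
  have IH: "border_sums_agree T D S"
    using inv by (simp add: toggle_invariant_def)
  have "diag_sum_on (insert (i, j) D) (toggle_step D S i j (T i j)) a b
      = int (rect_sum_on (insert (i, j) D) T a b)"
    if border: "(a, b) \<in> insert (i, j) D" "(a + 1, b + 1) \<notin> insert (i, j) D" for a b
  proof (cases "(a, b) = (i, j)")
    case True
    have "int (rect_sum_on (insert (i, j) D) T i j)
        = int (rect_sum_on D T (i - 1) j) + int (rect_sum_on D T i (j - 1))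
          - int (rect_sum_on D T (i - 1) (j - 1)) + int (T i j)"
      using arg_cong[OF rect_sum_on_insert_corner[OF corner_pos, of D T], of int] by simp
    then show ?thesis
      using True diag_sum_on_insert_corner border_sums_agree_near_corner[OF IH] by simp
  next
    case False
    then have "(a, b) \<in> D" "(a + 1, b + 1) \<notin> D"
      using border by auto
    moreover have "\<not> (i \<le> a \<and> j \<le> b)"
      using \<open>(a, b) \<in> D\<close> not_mem_above_corner by blast
    ultimately show ?thesis
      using border IH diag_sum_on_insert_other rect_sum_on_insert[of i a j b D T]
      by (simp add: border_sums_agree_def)
  qed
  then show ?thesis
    unfolding toggle_invariant_def border_sums_agree_def
    using down_closed_insert reverse_plane_partition_insert by blast
qed

definition add_box ::
    "(nat \<Rightarrow> nat \<Rightarrow> nat) \<Rightarrow> nat \<times> nat \<Rightarrow> (nat \<times> nat) set \<times> (nat \<Rightarrow> nat \<Rightarrow> int)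
       \<Rightarrow> (nat \<times> nat) set \<times> (nat \<Rightarrow> nat \<Rightarrow> int)" where
  "add_box T = (\<lambda>(i, j) (D, S). (insert (i, j) D, toggle_step D S i j (T i j)))"

lemma toggle_eq_fold_add_box: "toggle lam T = snd (fold (add_box T) (box_order lam) ({}, \<lambda>_ _. 0))"
  by (simp add: toggle_def add_box_def)

fun adds_corners :: "(nat \<times> nat) set \<Rightarrow> (nat \<times> nat) list \<Rightarrow> bool" where
  "adds_corners D [] \<longleftrightarrow> True"
| "adds_corners D (b # bs) \<longleftrightarrow> b \<notin> D \<and> down_closed (insert b D) \<and> adds_corners (insert b D) bs"

lemma adds_corners_append:
  "adds_corners D (bs @ cs) \<longleftrightarrow> adds_corners D bs \<and> adds_corners (D \<union> set bs) cs"
  by (induction bs arbitrary: D) auto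

lemma toggle_invariant_fold:
  assumes "toggle_invariant T D S" "adds_corners D bs"
  shows "\<exists>S'. fold (add_box T) bs (D, S) = (D \<union> set bs, S') \<and> toggle_invariant T (D \<union> set bs) S'"
  using assms
proof (induction bs arbitrary: D S)
  case Nil
  then show ?case by simp
next
  case (Cons b bs)
  obtain i j where b: "b = (i, j)"
    by fastforce
  have "toggle_invariant T (insert b D) (toggle_step D S i j (T i j))"
    using Cons.prems b by (auto intro: toggle_invariant_insert)
  then show ?case
    using Cons.IH[of "insert b D"] Cons.prems b by (simp add: add_box_def)
qed

lemma is_partition_snoc:
  "is_partition (lam @ [c]) \<longleftrightarrow> is_partition lam \<and> 0 < c \<and> (\<forall>r \<in> set lam. c \<le> r)"
  by (auto simp: is_partition_def)

lemma boxes_snoc: "boxes (lam @ [c]) = boxes lam \<union> {length lam + 1} \<times> {1..c}"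
  by (auto simp: boxes_def nth_append le_Suc_eq split: if_splits)

lemma box_order_snoc:
  "box_order (lam @ [c]) = box_order lam @ map (\<lambda>j. (length lam + 1, j)) [1..<c + 1]"
proof -
  have rows: "[1..<length (lam @ [c]) + 1] = [1..<length lam + 1] @ [length lam + 1]"
    by simp
  have prefix: "map (\<lambda>i. map (\<lambda>j. (i, j)) [1..<(lam @ [c]) ! (i - 1) + 1]) [1..<length lam + 1]
      = map (\<lambda>i. map (\<lambda>j. (i, j)) [1..<lam ! (i - 1) + 1]) [1..<length lam + 1]"
    by (intro map_cong) (auto simp del: upt_Suc simp: nth_append)
  show ?thesis
    unfolding box_order_def rows map_append prefix by (simp del: upt_Suc)
qed

lemma set_row: "set (map (\<lambda>j. (i, j)) [1..<c + 1]) = {i} \<times> {1..c}"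
  by auto

lemma box_order_Nil: "box_order [] = []"
  by (simp add: box_order_def)

lemma set_box_order: "set (box_order lam) = boxes lam"
proof (induction lam rule: rev_induct)
  case Nil
  then show ?case
    by (simp add: box_order_Nil boxes_def)
next
  case (snoc c lam)
  then show ?case
    unfolding box_order_snoc set_append set_row by (simp add: boxes_snoc)
qed

lemma down_closed_boxes:
  assumes "is_partition lam"
  shows "down_closed (boxes lam)"
proof -
  have row_length_antimono: "lam ! (p - 1) \<le> lam ! (p' - 1)"
    if "1 \<le> p'" "p' \<le> p" "p \<le> length lam" for p p'
    using assms that unfolding is_partition_def by (intro sorted_rev_nth_mono) auto
  show ?thesis
    unfolding down_closed_def boxes_def
    using row_length_antimono by clarsimp (meson le_trans)
qed

lemma adds_corners_row:
  assumes "is_partition (lam @ [c])" "c' \<le> c"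
  shows "adds_corners (boxes lam) (map (\<lambda>j. (length lam + 1, j)) [1..<c' + 1])"
  using assms(2)
proof (induction c')
  case 0
  then show ?case by simp
next
  case (Suc c')
  let ?row = "\<lambda>c. map (\<lambda>j. (length lam + 1, j)) [1..<c + 1]"
  have split: "?row (Suc c') = ?row c' @ [(length lam + 1, Suc c')]"
    by simp
  have "is_partition (lam @ [Suc c'])"
    using assms(1) Suc.prems by (auto simp: is_partition_snoc)
  moreover have "insert (length lam + 1, Suc c') (boxes lam \<union> {length lam + 1} \<times> {1..c'})
      = boxes (lam @ [Suc c'])"
    by (auto simp: boxes_snoc)
  moreover have "(length lam + 1, Suc c') \<notin> boxes lam"
    by (simp add: boxes_def)
  ultimately have "adds_corners (boxes lam \<union> set (?row c')) [(length lam + 1, Suc c')]"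
    unfolding set_row using down_closed_boxes by simp
  then show ?case
    using Suc unfolding split adds_corners_append by simp
qed

lemma adds_corners_box_order:
  assumes "is_partition lam"
  shows "adds_corners {} (box_order lam)"
  using assms
proof (induction lam rule: rev_induct)
  case Nil
  then show ?case
    by (simp add: box_order_Nil)
next
  case (snoc c lam)
  then show ?case
    using adds_corners_row[of lam c c]
    by (simp add: box_order_snoc adds_corners_append set_box_order is_partition_snoc)
qed

theorem proposition2p6:
  fixes lam :: "nat list" and T :: "nat \<Rightarrow> nat \<Rightarrow> nat" and a b :: nat
  assumes "is_partition lam"
    and "border_box lam a b"
  shows "diag_sum lam (toggle lam T) a b = int (rect_sum lam T a b)"
proof -
  have init: "toggle_invariant T {} (\<lambda>_ _. 0)"
    by (simp add: toggle_invariant_def down_closed_def reverse_plane_partition_def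
        border_sums_agree_def entry_def)
  obtain S where fold: "fold (add_box T) (box_order lam) ({}, \<lambda>_ _. 0) = (boxes lam, S)"
      and inv: "toggle_invariant T (boxes lam) S"
    using toggle_invariant_fold[OF init adds_corners_box_order[OF assms(1)]]
    unfolding set_box_order Un_empty_left by blast
  have "toggle lam T = S"
    using fold by (simp add: toggle_eq_fold_add_box)
  then show ?thesis
    using inv assms(2)
    unfolding diag_sum_eq_diag_sum_on rect_sum_eq_rect_sum_on toggle_invariant_def
      border_sums_agree_def border_box_def by blast
qed

end
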